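(* Let $n\ge1$, let $C$ be a cyclic group of order $n$ with generator $c_0$, and let $A$ be a finite abelian group with $A=\langle e_r\rangle\times\cdots\times\langle e_1\rangle$, where $e_i$ has order $d_i$. Let $G$ and $H$ be groups each containing $C$ as a central subgroup, with surjections $\pi_G:G\to A$, $\pi_H:H\to A$ with kernel $C$. Assume $\phi_G=\phi_H$, and that for each $1\le i\le r$ there exist $g_i\in G$, $h_i\in H$ with $\pi_G(g_i)=e_i=\pi_H(h_i)$ such that $g_i$ and $h_i$ have the same order, this order being either $d_i$ or $2d_i$. Then there exists a group isomorphism $f:G\to H$ which restricts to the identity on $C$ (in particular $f(c_0)=c_0$).
   Context: $[g,h]=ghg^{-1}h^{-1}$. For a group $G$ containing a central cyclic subgroup $C=\langle c_0\rangle$ of order $n$ with abelian quotient $A$ via $\pi_G$, the form $\phi_G:A\times A\to\mathbb{Z}/n$ is defined by $[\hat a,\hat b]=c_0^{\phi_G(a,b)}$ for any lifts $\hat a,\hat b$ of $a,b$ (this is independent of the lifts). *)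

theory Defs
  imports "HOL-Algebra.Algebra"
begin

definition commutator :: "('a, 'm) monoid_scheme \<Rightarrow> 'a \<Rightarrow> 'a \<Rightarrow> 'a" where
  "commutator G g h = g \<otimes>\<^bsub>G\<^esub> h \<otimes>\<^bsub>G\<^esub> inv\<^bsub>G\<^esub> g \<otimes>\<^bsub>G\<^esub> inv\<^bsub>G\<^esub> h"

text \<open>The form phi_G : A x A -> Z/n, with values represented in {0..<n}:
  [a_hat, b_hat] = c0^(phi_G(a,b)) for (chosen) lifts a_hat, b_hat of a, b.\<close>
definition phi_form ::
  "('a, 'm) monoid_scheme \<Rightarrow> ('a \<Rightarrow> 'b) \<Rightarrow> 'a \<Rightarrow> nat \<Rightarrow> 'b \<Rightarrow> 'b \<Rightarrow> nat" where
  "phi_form G \<pi> c0 n a b =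
     (THE k. k < n \<and>
        commutator G (SOME g. g \<in> carrier G \<and> \<pi> g = a) (SOME h. h \<in> carrier G \<and> \<pi> h = b)
          = c0 [^]\<^bsub>G\<^esub> k)"

definition is_internal_cyclic_decomp :: "('b, 'n) monoid_scheme \<Rightarrow> (nat \<Rightarrow> 'b) \<Rightarrow> nat \<Rightarrow> bool" where
  "is_internal_cyclic_decomp A e r \<longleftrightarrow>
     (\<forall>i\<in>{1..r}. e i \<in> carrier A) \<and>
     bij_betw (\<lambda>k. finprod A (\<lambda>i. e i [^]\<^bsub>A\<^esub> k i) {1..r})
       (Pi\<^sub>E {1..r} (\<lambda>i. {..<group.ord A (e i)})) (carrier A)"

end

theory Submission
  imports Defs
begin

text \<open>The fibre product M of G and H over A contains the diagonal copy D of C as a central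
  subgroup. Since the forms of G and H agree, the commutator of two elements of M lies in D, so
  Q = M/D is abelian, and the first projection induces a homomorphism from Q onto A. The class
  q_i of (g_i, h_i) lies over e_i and satisfies q_i^d_i = 1: the powers g_i^d_i and h_i^d_i are
  both 1 or both the unique involution of the cyclic group C. As A is the direct product of the
  cyclic groups generated by the e_i, the assignment e_i \<mapsto> q_i extends to a section of Q \<rightarrow> A,
  and the preimage in M of its image is the graph of an isomorphism G \<rightarrow> H fixing C.\<close>

section \<open>Cyclic groups and commutators\<close>

lemma (in group) nat_pow_mod_eq:
  assumes "x \<in> carrier G" "x [^] d = \<one>"
  shows "x [^] (k mod d) = x [^] (k::nat)"
proof -
  have "x [^] k = x [^] (d * (k div d) + k mod d)" by simp
  also have "\<dots> = (x [^] d) [^] (k div d) \<otimes> x [^] (k mod d)"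
    using assms(1) by (simp add: nat_pow_mult nat_pow_pow)
  also have "\<dots> = x [^] (k mod d)"
    using assms by simp
  finally show ?thesis by (rule sym)
qed

lemma (in group) cyclic_carrier_eq_powers:
  assumes "finite (carrier G)" "c \<in> carrier G" "subgroup_generated G {c} = G"
  shows "carrier G = (\<lambda>k. c [^] k) ` {..<ord c}"
proof -
  have "carrier G = generate G {c}"
    using carrier_subgroup_generated[of G "{c}"] assms by simp
  also have "\<dots> = {c [^] k | k. k \<in> {0..ord c - 1}}"
    using generate_pow_on_finite_carrier ord_elems assms by simp
  also have "\<dots> = (\<lambda>k. c [^] k) ` {..<ord c}"
    using ord_ge_1[OF assms(1,2)] by force
  finally show ?thesis .
qed

lemma (in group) cyclic_involution_unique:
  assumes "finite (carrier G)" "c \<in> carrier G" "subgroup_generated G {c} = G"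
    and "x \<in> carrier G" "x \<otimes> x = \<one>" "x \<noteq> \<one>"
  shows "x = c [^] (ord c div 2)"
proof -
  obtain k where k: "k < ord c" "x = c [^] k"
    using cyclic_carrier_eq_powers[OF assms(1-3)] assms(4) by auto
  have "ord c dvd k + k"
    using assms(2,5) k(2) by (simp add: nat_pow_mult flip: pow_eq_id)
  moreover have "k \<noteq> 0" using assms(6) k(2) by (auto intro: gr0I)
  ultimately obtain m where m: "k + k = ord c * m" "m \<noteq> 0"
    by (metis dvdE add_is_0 mult_0_right)
  moreover have "ord c * m < ord c * 2" using k(1) m(1) by linarith
  ultimately have "k + k = ord c" using m(1) by (simp add: less_2_cases_iff)
  then show ?thesis using k(2) by (metis add_self_div_2)
qed

lemma (in group) commutator_eq_mult_inv:
  assumes "x \<in> carrier G" "y \<in> carrier G"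
  shows "commutator G x y = x \<otimes> y \<otimes> inv (y \<otimes> x)"
  using assms by (simp add: commutator_def inv_mult_group m_assoc)

lemma (in group) commutator_swap:
  assumes "x \<in> carrier G" "y \<in> carrier G"
  shows "commutator G x y \<otimes> (y \<otimes> x) = x \<otimes> y"
  using assms by (simp add: commutator_eq_mult_inv m_assoc)

lemma (in group) commutator_mult_central:
  assumes "x \<in> carrier G" "y \<in> carrier G" "c \<in> carrier G" "c' \<in> carrier G"
    and "\<And>g. g \<in> carrier G \<Longrightarrow> c \<otimes> g = g \<otimes> c"
    and "\<And>g. g \<in> carrier G \<Longrightarrow> c' \<otimes> g = g \<otimes> c'"
  shows "commutator G (x \<otimes> c) (y \<otimes> c') = commutator G x y"
proof -
  have shift: "u \<otimes> a \<otimes> (v \<otimes> b) = u \<otimes> v \<otimes> (a \<otimes> b)"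
    if "u \<in> carrier G" "v \<in> carrier G" "a \<in> carrier G" "b \<in> carrier G" "a \<otimes> v = v \<otimes> a"
    for u v a b
    using that by (simp add: m_assoc flip: m_assoc[of a v b])
  have "x \<otimes> c \<otimes> (y \<otimes> c') = x \<otimes> y \<otimes> (c \<otimes> c')"
    using shift[of x y c c'] assms(1-4) assms(5)[of y] by simp
  moreover have "y \<otimes> c' \<otimes> (x \<otimes> c) = y \<otimes> x \<otimes> (c \<otimes> c')"
    using shift[of y x c' c] assms(1-4) assms(6)[of x] assms(5)[of c'] by simp
  ultimately have "commutator G (x \<otimes> c) (y \<otimes> c') = x \<otimes> y \<otimes> (c \<otimes> c') \<otimes> inv (y \<otimes> x \<otimes> (c \<otimes> c'))"
    using assms(1-4) by (simp add: commutator_eq_mult_inv)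
  also have "\<dots> = x \<otimes> y \<otimes> (c \<otimes> c') \<otimes> inv (c \<otimes> c') \<otimes> inv (y \<otimes> x)"
    using assms(1-4) by (simp add: inv_mult_group m_assoc)
  also have "\<dots> = x \<otimes> y \<otimes> inv (y \<otimes> x)"
    using assms(1-4) by (simp add: m_assoc)
  finally show ?thesis using assms(1-4) by (simp add: commutator_eq_mult_inv)
qed

section \<open>Homomorphisms out of a product of cyclic groups\<close>

lemma comm_group_hom_finprod:
  assumes "comm_group Q" "comm_group A" "\<theta> \<in> hom Q A" "f \<in> I \<rightarrow> carrier Q"
  shows "\<theta> (finprod Q f I) = finprod A (\<lambda>i. \<theta> (f i)) I"
proof -
  interpret Q: comm_group Q by fact
  interpret A: comm_group A by fact
  interpret group_hom Q A \<theta>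
    by (simp add: group_hom_axioms_def group_hom_def Q.is_group A.is_group assms(3))
  show ?thesis using assms(4)
  proof (induction I rule: infinite_finite_induct)
    case (insert i I)
    then show ?case by (simp add: Pi_def)
  qed simp_all
qed

lemma (in comm_group) finprod_pow_add_mod:
  fixes k l d :: "'i \<Rightarrow> nat"
  assumes "\<And>i. i \<in> I \<Longrightarrow> x i \<in> carrier G" "\<And>i. i \<in> I \<Longrightarrow> x i [^] d i = \<one>"
  shows "finprod G (\<lambda>i. x i [^] ((k i + l i) mod d i)) I =
    finprod G (\<lambda>i. x i [^] k i) I \<otimes> finprod G (\<lambda>i. x i [^] l i) I"
proof -
  have "finprod G (\<lambda>i. x i [^] ((k i + l i) mod d i)) I =
      finprod G (\<lambda>i. x i [^] k i \<otimes> x i [^] l i) I"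
    by (rule finprod_cong') (use assms in \<open>simp_all add: Pi_def nat_pow_mod_eq nat_pow_mult\<close>)
  then show ?thesis using assms(1) by (simp add: Pi_def)
qed

lemma internal_cyclic_decomp_extend_hom:
  fixes A :: "('b, 'd) monoid_scheme" and Q :: "('c, 'e) monoid_scheme"
  assumes A: "comm_group A" and Q: "comm_group Q" and decomp: "is_internal_cyclic_decomp A e r"
    and q: "\<And>i. i \<in> {1..r} \<Longrightarrow> q i \<in> carrier Q"
    and q_pow: "\<And>i. i \<in> {1..r} \<Longrightarrow> q i [^]\<^bsub>Q\<^esub> group.ord A (e i) = \<one>\<^bsub>Q\<^esub>"
  obtains \<sigma> where "\<sigma> \<in> hom A Q"
    and "\<And>k. k \<in> (\<Pi>\<^sub>E i\<in>{1..r}. {..<group.ord A (e i)}) \<Longrightarrow>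
      \<sigma> (finprod A (\<lambda>i. e i [^]\<^bsub>A\<^esub> k i) {1..r}) = finprod Q (\<lambda>i. q i [^]\<^bsub>Q\<^esub> k i) {1..r}"
proof -
  interpret A: comm_group A by fact
  interpret Q: comm_group Q by fact
  define E where "E = (\<Pi>\<^sub>E i\<in>{1..r}. {..<A.ord (e i)})"
  define \<epsilon> where "\<epsilon> = (\<lambda>k. finprod A (\<lambda>i. e i [^]\<^bsub>A\<^esub> (k i :: nat)) {1..r})"
  define \<kappa> where "\<kappa> = inv_into E \<epsilon>"
  define \<sigma> where "\<sigma> a = finprod Q (\<lambda>i. q i [^]\<^bsub>Q\<^esub> \<kappa> a i) {1..r}" for a
  have e: "\<And>i. i \<in> {1..r} \<Longrightarrow> e i \<in> carrier A"
    and bij: "bij_betw \<epsilon> E (carrier A)"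
    using decomp by (simp_all add: is_internal_cyclic_decomp_def E_def \<epsilon>_def)
  have \<kappa>: "\<kappa> a \<in> E" "\<epsilon> (\<kappa> a) = a" if "a \<in> carrier A" for a
    using that bij by (auto simp: \<kappa>_def bij_betw_def inv_into_into f_inv_into_f)
  have \<kappa>_\<epsilon>: "\<kappa> (\<epsilon> k) = k" if "k \<in> E" for k
    using that bij by (simp add: \<kappa>_def bij_betw_def)
  have "\<sigma> (a \<otimes>\<^bsub>A\<^esub> b) = \<sigma> a \<otimes>\<^bsub>Q\<^esub> \<sigma> b" if ab: "a \<in> carrier A" "b \<in> carrier A" for a b
  proof -
    define m where "m = (\<lambda>i\<in>{1..r}. (\<kappa> a i + \<kappa> b i) mod A.ord (e i))"
    have "m \<in> E"
      using \<kappa>(1)[OF ab(1)] by (auto simp: m_def E_def PiE_iff)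
    moreover have "\<epsilon> m = \<epsilon> (\<kappa> a) \<otimes>\<^bsub>A\<^esub> \<epsilon> (\<kappa> b)"
    proof -
      have "\<epsilon> m = finprod A (\<lambda>i. e i [^]\<^bsub>A\<^esub> ((\<kappa> a i + \<kappa> b i) mod A.ord (e i))) {1..r}"
        unfolding \<epsilon>_def m_def by (rule A.finprod_cong') (simp_all add: Pi_def e)
      also have "\<dots> = \<epsilon> (\<kappa> a) \<otimes>\<^bsub>A\<^esub> \<epsilon> (\<kappa> b)"
        unfolding \<epsilon>_def by (rule A.finprod_pow_add_mod) (simp_all add: e)
      finally show ?thesis .
    qed
    ultimately have "\<kappa> (a \<otimes>\<^bsub>A\<^esub> b) = m" using \<kappa>_\<epsilon> \<kappa>(2) ab by metis
    then have "\<sigma> (a \<otimes>\<^bsub>A\<^esub> b) =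
        finprod Q (\<lambda>i. q i [^]\<^bsub>Q\<^esub> ((\<kappa> a i + \<kappa> b i) mod A.ord (e i))) {1..r}"
      unfolding \<sigma>_def m_def by (intro Q.finprod_cong') (simp_all add: Pi_def q)
    also have "\<dots> = \<sigma> a \<otimes>\<^bsub>Q\<^esub> \<sigma> b"
      unfolding \<sigma>_def by (rule Q.finprod_pow_add_mod) (simp_all add: q q_pow)
    finally show ?thesis .
  qed
  then have "\<sigma> \<in> hom A Q" by (intro homI) (simp_all add: \<sigma>_def Pi_def q)
  moreover have "\<sigma> (\<epsilon> k) = finprod Q (\<lambda>i. q i [^]\<^bsub>Q\<^esub> k i) {1..r}" if "k \<in> E" for k
    using \<kappa>_\<epsilon>[OF that] by (simp add: \<sigma>_def)
  ultimately show ?thesis using that by (simp add: E_def \<epsilon>_def)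
qed

lemma exists_section_of_cyclic_decomp:
  fixes A :: "('b, 'd) monoid_scheme" and Q :: "('c, 'e) monoid_scheme"
  assumes A: "comm_group A" and Q: "comm_group Q" and decomp: "is_internal_cyclic_decomp A e r"
    and \<theta>: "\<theta> \<in> hom Q A"
    and lift: "\<And>i. i \<in> {1..r} \<Longrightarrow>
      \<exists>q\<in>carrier Q. \<theta> q = e i \<and> q [^]\<^bsub>Q\<^esub> group.ord A (e i) = \<one>\<^bsub>Q\<^esub>"
  obtains \<sigma> where "\<sigma> \<in> hom A Q" "\<And>a. a \<in> carrier A \<Longrightarrow> \<theta> (\<sigma> a) = a"
proof -
  interpret A: comm_group A by fact
  interpret Q: comm_group Q by fact
  interpret group_hom Q A \<theta>
    by (simp add: group_hom_axioms_def group_hom_def Q.is_group A.is_group \<theta>)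
  have "\<forall>i\<in>{1..r}. \<exists>q. q \<in> carrier Q \<and> \<theta> q = e i \<and> q [^]\<^bsub>Q\<^esub> A.ord (e i) = \<one>\<^bsub>Q\<^esub>"
    using lift by blast
  from bchoice[OF this] obtain q where q: "\<forall>i\<in>{1..r}. q i \<in> carrier Q \<and> \<theta> (q i) = e i \<and>
      q i [^]\<^bsub>Q\<^esub> A.ord (e i) = \<one>\<^bsub>Q\<^esub>"
    by blast
  obtain \<sigma> where \<sigma>: "\<sigma> \<in> hom A Q"
    and \<sigma>_\<epsilon>: "\<And>k. k \<in> (\<Pi>\<^sub>E i\<in>{1..r}. {..<A.ord (e i)}) \<Longrightarrow>
      \<sigma> (finprod A (\<lambda>i. e i [^]\<^bsub>A\<^esub> k i) {1..r}) = finprod Q (\<lambda>i. q i [^]\<^bsub>Q\<^esub> k i) {1..r}"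
    by (rule internal_cyclic_decomp_extend_hom[OF A Q decomp, of q]) (use q in simp_all)
  have "\<theta> (\<sigma> a) = a" if a_mem: "a \<in> carrier A" for a
  proof -
    obtain k where k: "k \<in> (\<Pi>\<^sub>E i\<in>{1..r}. {..<A.ord (e i)})"
      and a: "a = finprod A (\<lambda>i. e i [^]\<^bsub>A\<^esub> k i) {1..r}"
      using decomp a_mem unfolding is_internal_cyclic_decomp_def bij_betw_def by blast
    have "\<theta> (\<sigma> a) = finprod A (\<lambda>i. \<theta> (q i [^]\<^bsub>Q\<^esub> k i)) {1..r}"
      using \<sigma>_\<epsilon>[OF k] q by (simp add: a comm_group_hom_finprod[OF Q A \<theta>] Pi_def)
    also have "\<dots> = a"
      unfolding a using q decomp
      by (intro A.finprod_cong') (auto simp: Pi_def hom_nat_pow is_internal_cyclic_decomp_def)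
    finally show ?thesis .
  qed
  with \<sigma> show ?thesis using that by blast
qed

section \<open>Graphs of isomorphisms and fibre products\<close>

lemma (in group_hom) subgroup_vimage:
  assumes "subgroup S H"
  shows "subgroup (carrier G \<inter> h -` S) G"
  using assms by (intro G.subgroupI) (auto simp: subgroup.one_closed subgroup.m_closed subgroup.m_inv_closed)

lemma subgroup_graph_iso:
  assumes G: "group G" and H: "group H" and K: "subgroup K (G \<times>\<times> H)"
    and fst_surj: "\<And>x. x \<in> carrier G \<Longrightarrow> \<exists>y. (x, y) \<in> K"
    and snd_surj: "\<And>y. y \<in> carrier H \<Longrightarrow> \<exists>x. (x, y) \<in> K"
    and fst_trivial: "\<And>x. (x, \<one>\<^bsub>H\<^esub>) \<in> K \<Longrightarrow> x = \<one>\<^bsub>G\<^esub>"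
    and snd_trivial: "\<And>y. (\<one>\<^bsub>G\<^esub>, y) \<in> K \<Longrightarrow> y = \<one>\<^bsub>H\<^esub>"
  obtains f where "f \<in> iso G H" "\<And>x y. (x, y) \<in> K \<Longrightarrow> f x = y"
proof -
  interpret G: group G by fact
  interpret H: group H by fact
  have K_carrier: "x \<in> carrier G" "y \<in> carrier H" if "(x, y) \<in> K" for x y
    using subgroup.subset[OF K] that by auto
  have unique: "y = y'" if "(x, y) \<in> K" "(x, y') \<in> K" for x y y'
  proof -
    have "inv\<^bsub>G \<times>\<times> H\<^esub> (x, y) \<otimes>\<^bsub>G \<times>\<times> H\<^esub> (x, y') \<in> K"
      using K that by (simp add: subgroup.m_closed subgroup.m_inv_closed)
    then have "inv\<^bsub>H\<^esub> y \<otimes>\<^bsub>H\<^esub> y' = \<one>\<^bsub>H\<^esub>"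
      using snd_trivial K_carrier that by (simp add: G H)
    then show ?thesis using K_carrier that by (metis H.inv_equality H.inv_inv H.inv_closed)
  qed
  define f where "f x = (THE y. (x, y) \<in> K)" for x
  have f: "f x = y" if "(x, y) \<in> K" for x y
    unfolding f_def using that unique by blast
  have graph: "(x, f x) \<in> K" if "x \<in> carrier G" for x
    using fst_surj[OF that] f by blast
  have "f \<in> hom G H"
  proof (rule homI)
    show "f x \<in> carrier H" if "x \<in> carrier G" for x
      using graph[OF that] K_carrier by blast
    show "f (x \<otimes>\<^bsub>G\<^esub> y) = f x \<otimes>\<^bsub>H\<^esub> f y" if "x \<in> carrier G" "y \<in> carrier G" for x y
      using subgroup.m_closed[OF K graph[OF that(1)] graph[OF that(2)]] f by simp
  qed
  then interpret group_hom G H f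
    by (simp add: group_hom_axioms_def group_hom_def G H)
  have "f \<in> iso G H"
    unfolding iso_iff using snd_surj f graph K_carrier fst_trivial by (metis image_eqI subsetI)
  then show ?thesis using that f by blast
qed

definition fibre_product ::
  "('a, 'm) monoid_scheme \<Rightarrow> ('b, 'n) monoid_scheme \<Rightarrow> ('a \<Rightarrow> 'c) \<Rightarrow> ('b \<Rightarrow> 'c) \<Rightarrow> ('a \<times> 'b) monoid"
  where "fibre_product G H f g =
    (G \<times>\<times> H)\<lparr>carrier := {z \<in> carrier G \<times> carrier H. f (fst z) = g (snd z)}\<rparr>"

lemma carrier_fibre_product:
  "carrier (fibre_product G H f g) = {z \<in> carrier G \<times> carrier H. f (fst z) = g (snd z)}"
  by (simp add: fibre_product_def)

lemma mult_fibre_product: "x \<otimes>\<^bsub>fibre_product G H f g\<^esub> y = x \<otimes>\<^bsub>G \<times>\<times> H\<^esub> y"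
  by (simp add: fibre_product_def)

lemma nat_pow_fibre_product:
  "(x, y) [^]\<^bsub>fibre_product G H f g\<^esub> (k::nat) = (x [^]\<^bsub>G\<^esub> k, y [^]\<^bsub>H\<^esub> k)"
  by (induction k) (simp_all add: fibre_product_def)

lemma subgroup_fibre_product:
  assumes "group G" "group H" "group A" "f \<in> hom G A" "g \<in> hom H A"
  shows "subgroup (carrier (fibre_product G H f g)) (G \<times>\<times> H)"
proof -
  interpret f: group_hom G A f
    using assms by (simp add: group_hom_axioms_def group_hom_def)
  interpret g: group_hom H A g
    using assms by (simp add: group_hom_axioms_def group_hom_def)
  interpret group "G \<times>\<times> H" using assms by (simp add: DirProd_group)
  show ?thesis
    by (rule subgroupI) (force simp: assms carrier_fibre_product mult_DirProd')+
qed

lemma group_fibre_product: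
  assumes "group G" "group H" "group A" "f \<in> hom G A" "g \<in> hom H A"
  shows "group (fibre_product G H f g)"
  using subgroup.subgroup_is_group[OF subgroup_fibre_product[OF assms]] DirProd_group[OF assms(1,2)]
  by (simp add: fibre_product_def)

lemma inv_fibre_product:
  assumes "group G" "group H" "group A" "f \<in> hom G A" "g \<in> hom H A"
    and "z \<in> carrier (fibre_product G H f g)"
  shows "inv\<^bsub>fibre_product G H f g\<^esub> z = inv\<^bsub>G \<times>\<times> H\<^esub> z"
  using group.m_inv_consistent[OF DirProd_group[OF assms(1,2)] subgroup_fibre_product[OF assms(1-5)]]
    assms(6) by (simp add: fibre_product_def)

section \<open>Central extensions of A by a cyclic group C\<close>

locale central_extension =
  C: group C + group G + A: comm_group A
  for C :: "('a, 'c) monoid_scheme" and G :: "('a, 'g) monoid_scheme" (structure)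
    and A :: "('b, 'd) monoid_scheme" +
  fixes \<pi> :: "'a \<Rightarrow> 'b" and c0 :: 'a and n :: nat
  assumes order_C: "order C = n" and n_pos: "n \<ge> 1"
    and generator: "c0 \<in> carrier C" "subgroup_generated C {c0} = C"
    and subgroup_C: "subgroup (carrier C) G"
    and mult_C: "\<And>x y. x \<in> carrier C \<Longrightarrow> y \<in> carrier C \<Longrightarrow> x \<otimes>\<^bsub>C\<^esub> y = x \<otimes>\<^bsub>G\<^esub> y"
    and central_C: "\<And>c g. c \<in> carrier C \<Longrightarrow> g \<in> carrier G \<Longrightarrow> c \<otimes>\<^bsub>G\<^esub> g = g \<otimes>\<^bsub>G\<^esub> c"
    and hom_\<pi>: "\<pi> \<in> hom G A"
    and kernel_\<pi>: "kernel G A \<pi> = carrier C"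
begin

sublocale group_hom G A \<pi>
  by (simp add: group_hom_axioms_def group_hom_def is_group A.is_group hom_\<pi>)

lemma carrier_C_subset: "carrier C \<subseteq> carrier G"
  using subgroup_C by (rule subgroup.subset)

lemma mem_C_iff: "x \<in> carrier C \<longleftrightarrow> x \<in> carrier G \<and> \<pi> x = \<one>\<^bsub>A\<^esub>"
  using kernel_\<pi> by (auto simp: kernel_def)

lemma \<pi>_C: "c \<in> carrier C \<Longrightarrow> \<pi> c = \<one>\<^bsub>A\<^esub>"
  by (simp add: mem_C_iff)

lemma one_C: "\<one>\<^bsub>C\<^esub> = \<one>"
  using mult_C[of "\<one>\<^bsub>C\<^esub>" "\<one>\<^bsub>C\<^esub>"] carrier_C_subset
  by (metis C.l_one C.one_closed l_cancel_one subsetD)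

lemma pow_C: "c \<in> carrier C \<Longrightarrow> c [^]\<^bsub>C\<^esub> (k::nat) = c [^] k"
proof (induction k)
  case (Suc k)
  then show ?case using mult_C[of "c [^]\<^bsub>C\<^esub> k" c] C.nat_pow_closed[of c k] by simp
qed (simp add: one_C)

lemma inv_C: "c \<in> carrier C \<Longrightarrow> inv\<^bsub>C\<^esub> c = inv c"
  using carrier_C_subset mult_C[of "inv\<^bsub>C\<^esub> c" c]
  by (metis C.inv_closed C.l_inv inv_equality one_C subsetD)

lemma finite_C: "finite (carrier C)"
  using order_C n_pos by (simp add: order_def card_ge_0_finite)

lemma ord_generator: "C.ord c0 = n"
  using C.cyclic_order_is_ord[OF generator(1)] generator(2) order_C by simp

lemma carrier_C_eq_powers: "carrier C = (\<lambda>k. c0 [^] k) ` {..<n}"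
  using C.cyclic_carrier_eq_powers[OF finite_C generator] ord_generator generator(1) pow_C
  by simp

lemma inj_on_powers: "inj_on (\<lambda>k. c0 [^] (k::nat)) {..<n}"
proof -
  have "{..<n} = {0..C.ord c0 - 1}" using ord_generator n_pos by auto
  then show ?thesis using C.ord_inj[OF generator(1)] by (simp add: pow_C[OF generator(1)])
qed

lemma commutator_mem_C:
  assumes "x \<in> carrier G" "y \<in> carrier G"
  shows "commutator G x y \<in> carrier C"
proof -
  have "\<pi> (commutator G x y) = \<pi> x \<otimes>\<^bsub>A\<^esub> \<pi> y \<otimes>\<^bsub>A\<^esub> inv\<^bsub>A\<^esub> (\<pi> y \<otimes>\<^bsub>A\<^esub> \<pi> x)"
    using assms by (simp add: commutator_eq_mult_inv)
  also have "\<dots> = \<one>\<^bsub>A\<^esub>"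
    using assms by (simp add: A.m_comm[of "\<pi> x"])
  finally show ?thesis using assms mem_C_iff by (simp add: commutator_def)
qed

lemma commutator_lift_invariant:
  assumes "x \<in> carrier G" "y \<in> carrier G" "x' \<in> carrier G" "y' \<in> carrier G"
    and "\<pi> x' = \<pi> x" "\<pi> y' = \<pi> y"
  shows "commutator G x' y' = commutator G x y"
proof -
  have "inv x \<otimes> x' \<in> carrier C" "inv y \<otimes> y' \<in> carrier C"
    using assms by (simp_all add: mem_C_iff)
  moreover have "x' = x \<otimes> (inv x \<otimes> x')" "y' = y \<otimes> (inv y \<otimes> y')"
    using assms by (simp_all flip: m_assoc)
  ultimately show ?thesis
    using commutator_mult_central[of x y "inv x \<otimes> x'" "inv y \<otimes> y'"] assms(1-4) central_C
    by (metis carrier_C_subset subsetD)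
qed

lemma commutator_eq_phi_form:
  assumes "x \<in> carrier G" "y \<in> carrier G"
  shows "commutator G x y = c0 [^] phi_form G \<pi> c0 n (\<pi> x) (\<pi> y)"
proof -
  define x' where "x' = (SOME g. g \<in> carrier G \<and> \<pi> g = \<pi> x)"
  define y' where "y' = (SOME h. h \<in> carrier G \<and> \<pi> h = \<pi> y)"
  have x': "x' \<in> carrier G" "\<pi> x' = \<pi> x" and y': "y' \<in> carrier G" "\<pi> y' = \<pi> y"
    unfolding x'_def y'_def using assms by (metis (mono_tags, lifting) someI)+
  have eq: "commutator G x' y' = commutator G x y"
    using commutator_lift_invariant assms x' y' by blast
  obtain k where k: "k < n" "commutator G x y = c0 [^] k"
    using commutator_mem_C[OF assms] carrier_C_eq_powers by auto
  have "phi_form G \<pi> c0 n (\<pi> x) (\<pi> y) = k"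
    unfolding phi_form_def x'_def[symmetric] y'_def[symmetric] eq
    by (rule the_equality) (use k inj_on_powers in \<open>auto simp: inj_on_def\<close>)
  with k show ?thesis by simp
qed

lemma pow_lift_eq:
  assumes "g \<in> carrier G" "\<pi> g [^]\<^bsub>A\<^esub> d = \<one>\<^bsub>A\<^esub>" "ord g = d \<or> ord g = 2 * d"
  shows "g [^] d = (if ord g = d then \<one>\<^bsub>C\<^esub> else c0 [^]\<^bsub>C\<^esub> (n div 2))"
proof (cases "ord g = d")
  case True
  then show ?thesis using assms(1) pow_ord_eq_1 one_C by metis
next
  case False
  with assms(3) have ord_g: "ord g = 2 * d" by simp
  have "g [^] d \<in> carrier C"
    using assms(1,2) by (simp add: mem_C_iff hom_nat_pow)
  moreover have "g [^] d \<otimes> g [^] d = \<one>"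
    using assms(1) ord_g by (simp add: nat_pow_mult pow_eq_id flip: mult_2)
  moreover have "g [^] d \<noteq> \<one>"
    using assms(1) ord_g False by (simp add: pow_eq_id)
  ultimately have "g [^] d = c0 [^]\<^bsub>C\<^esub> (n div 2)"
    using C.cyclic_involution_unique[OF finite_C generator] ord_generator
    by (simp add: mult_C one_C)
  with False show ?thesis by simp
qed

end

locale central_extension_pair =
  G: central_extension C G A \<pi>G c0 n + H: central_extension C H A \<pi>H c0 n
  for C :: "('a, 'c) monoid_scheme" and G :: "('a, 'g) monoid_scheme"
    and H :: "('a, 'h) monoid_scheme" and A :: "('b, 'd) monoid_scheme"
    and \<pi>G \<pi>H c0 n +
  assumes phi_form_eq: "\<And>a b. a \<in> carrier A \<Longrightarrow> b \<in> carrier A \<Longrightarrow>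
    phi_form G \<pi>G c0 n a b = phi_form H \<pi>H c0 n a b"
begin

abbreviation Fib :: "('a \<times> 'a) monoid" where "Fib \<equiv> fibre_product G H \<pi>G \<pi>H"

abbreviation Diag :: "('a \<times> 'a) set" where "Diag \<equiv> Id_on (carrier C)"

sublocale Fib: group Fib
  by (rule group_fibre_product[where A = A])
    (simp_all add: G.is_group H.is_group G.A.is_group G.hom_\<pi> H.hom_\<pi>)

lemma inv_Fib: "z \<in> carrier Fib \<Longrightarrow> inv\<^bsub>Fib\<^esub> z = inv\<^bsub>G \<times>\<times> H\<^esub> z"
  by (rule inv_fibre_product[where A = A])
    (simp_all add: G.is_group H.is_group G.A.is_group G.hom_\<pi> H.hom_\<pi>)

lemma one_G_eq_one_H: "\<one>\<^bsub>G\<^esub> = \<one>\<^bsub>H\<^esub>"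
  using G.one_C H.one_C by simp

lemma Diag_subset: "Diag \<subseteq> carrier Fib"
  using G.\<pi>_C H.\<pi>_C G.carrier_C_subset H.carrier_C_subset by (auto simp: carrier_fibre_product)

lemma Diag_central: "d \<in> Diag \<Longrightarrow> z \<in> carrier Fib \<Longrightarrow> d \<otimes>\<^bsub>Fib\<^esub> z = z \<otimes>\<^bsub>Fib\<^esub> d"
  using G.central_C H.central_C by (auto simp: carrier_fibre_product mult_fibre_product mult_DirProd')

lemma subgroup_Diag: "subgroup Diag Fib"
proof (rule Fib.subgroupI)
  fix d assume "d \<in> Diag"
  then obtain c where c: "c \<in> carrier C" "d = (c, c)" by blast
  moreover have "d \<in> carrier Fib" "c \<in> carrier G" "c \<in> carrier H"
    using c Diag_subset G.carrier_C_subset H.carrier_C_subset by auto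
  ultimately have "inv\<^bsub>Fib\<^esub> d = (inv\<^bsub>C\<^esub> c, inv\<^bsub>C\<^esub> c)"
    by (simp add: inv_Fib G.is_group H.is_group flip: G.inv_C H.inv_C)
  then show "inv\<^bsub>Fib\<^esub> d \<in> Diag" using c by auto
next
  fix d d' assume "d \<in> Diag" "d' \<in> Diag"
  then show "d \<otimes>\<^bsub>Fib\<^esub> d' \<in> Diag"
    by (auto simp: mult_fibre_product simp flip: G.mult_C H.mult_C)
qed (use Diag_subset in auto)

lemma normal_Diag: "Diag \<lhd> Fib"
proof (rule Fib.normalI[OF subgroup_Diag], intro ballI)
  fix z assume "z \<in> carrier Fib"
  then show "Diag #>\<^bsub>Fib\<^esub> z = z <#\<^bsub>Fib\<^esub> Diag"
    unfolding r_coset_def l_coset_def by (intro SUP_cong) (metis Diag_central)+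
qed

sublocale Diag: normal Diag Fib
  by (rule normal_Diag)

lemma Diag_coset_mult: "d \<in> Diag \<Longrightarrow> z \<in> carrier Fib \<Longrightarrow> Diag #>\<^bsub>Fib\<^esub> (d \<otimes>\<^bsub>Fib\<^esub> z) = Diag #>\<^bsub>Fib\<^esub> z"
  using Diag_subset by (metis Fib.rcosI Fib.repr_independence subgroup_Diag)

text \<open>This is where the equality of the forms enters: the commutators of the two components
  of z and w coincide.\<close>

lemma mult_eq_Diag_mult_swap:
  assumes "z \<in> carrier Fib" "w \<in> carrier Fib"
  obtains d where "d \<in> Diag" "z \<otimes>\<^bsub>Fib\<^esub> w = d \<otimes>\<^bsub>Fib\<^esub> (w \<otimes>\<^bsub>Fib\<^esub> z)"
proof -
  obtain x y x' y' where z: "z = (x, y)" and w: "w = (x', y')" by fastforce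
  have xy: "x \<in> carrier G" "x' \<in> carrier G" "y \<in> carrier H" "y' \<in> carrier H"
    and \<pi>: "\<pi>G x = \<pi>H y" "\<pi>G x' = \<pi>H y'"
    using assms z w by (auto simp: carrier_fibre_product)
  define \<gamma> where "\<gamma> = commutator G x x'"
  have "commutator H y y' = \<gamma>"
    using G.commutator_eq_phi_form[of x x'] H.commutator_eq_phi_form[of y y'] xy \<pi>
      phi_form_eq[of "\<pi>H y" "\<pi>H y'"] G.pow_C[OF G.generator(1)] H.pow_C[OF H.generator(1)]
    by (simp add: \<gamma>_def)
  moreover have "(\<gamma>, \<gamma>) \<in> Diag"
    using G.commutator_mem_C[OF xy(1,2)] by (simp add: Id_on_iff \<gamma>_def)
  ultimately show ?thesis
    using that[of "(\<gamma>, \<gamma>)"] G.commutator_swap[OF xy(1,2)] H.commutator_swap[OF xy(3,4)]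
    by (simp add: z w \<gamma>_def mult_fibre_product)
qed

lemma comm_group_Mod: "comm_group (Fib Mod Diag)"
proof (rule group.group_comm_groupI[OF Diag.factorgroup_is_group])
  fix U V assume "U \<in> carrier (Fib Mod Diag)" "V \<in> carrier (Fib Mod Diag)"
  then obtain z w where zw: "z \<in> carrier Fib" "w \<in> carrier Fib"
    and U: "U = Diag #>\<^bsub>Fib\<^esub> z" and V: "V = Diag #>\<^bsub>Fib\<^esub> w"
    by (auto simp: carrier_FactGroup)
  obtain d where "d \<in> Diag" "z \<otimes>\<^bsub>Fib\<^esub> w = d \<otimes>\<^bsub>Fib\<^esub> (w \<otimes>\<^bsub>Fib\<^esub> z)"
    using mult_eq_Diag_mult_swap[OF zw] .
  then show "U \<otimes>\<^bsub>Fib Mod Diag\<^esub> V = V \<otimes>\<^bsub>Fib Mod Diag\<^esub> U"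
    using zw by (simp add: U V Diag.rcos_sum Diag_coset_mult)
qed

lemma exists_hom_Mod_Diag:
  obtains \<theta> where "\<theta> \<in> hom (Fib Mod Diag) A"
    and "\<And>z. z \<in> carrier Fib \<Longrightarrow> \<theta> (Diag #>\<^bsub>Fib\<^esub> z) = \<pi>G (fst z)"
proof (rule FactGroup_universal[OF _ normal_Diag])
  show "(\<lambda>z. \<pi>G (fst z)) \<in> hom Fib A"
    by (rule homI) (auto simp: carrier_fibre_product mult_fibre_product mult_DirProd')
next
  fix z w assume zw: "z \<in> carrier Fib" "w \<in> carrier Fib" "Diag #>\<^bsub>Fib\<^esub> z = Diag #>\<^bsub>Fib\<^esub> w"
  then obtain c where c: "c \<in> carrier C" "z = (c, c) \<otimes>\<^bsub>Fib\<^esub> w"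
    using Fib.rcos_self[OF zw(1) subgroup_Diag] by (auto simp: r_coset_def)
  then show "\<pi>G (fst z) = \<pi>G (fst w)"
    using zw(2) G.carrier_C_subset G.\<pi>_C
    by (auto simp: carrier_fibre_product mult_fibre_product mult_DirProd')
qed auto

lemma coset_pow_eq_one_of_lifts:
  assumes "g \<in> carrier G" "h \<in> carrier H" "\<pi>G g = \<pi>H h" "\<pi>G g [^]\<^bsub>A\<^esub> d = \<one>\<^bsub>A\<^esub>"
    and "G.ord g = H.ord h" "G.ord g = d \<or> G.ord g = 2 * d"
  shows "(Diag #>\<^bsub>Fib\<^esub> (g, h)) [^]\<^bsub>Fib Mod Diag\<^esub> d = \<one>\<^bsub>Fib Mod Diag\<^esub>"
proof -
  define v where "v = (if G.ord g = d then \<one>\<^bsub>C\<^esub> else c0 [^]\<^bsub>C\<^esub> (n div 2))"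
  have "g [^]\<^bsub>G\<^esub> d = v" "h [^]\<^bsub>H\<^esub> d = v"
    using G.pow_lift_eq[of g d] H.pow_lift_eq[of h d] assms by (simp_all add: v_def)
  moreover have "v \<in> carrier C" using G.generator(1) by (simp add: v_def)
  moreover have "(g, h) \<in> carrier Fib" using assms(1-3) by (simp add: carrier_fibre_product)
  ultimately show ?thesis
    using Fib.coset_join2[OF _ subgroup_Diag] Diag_subset
    by (auto simp: Diag.FactGroup_pow nat_pow_fibre_product)
qed

lemma Diag_coset_with_fst:
  assumes "z \<in> carrier Fib" "x \<in> carrier G" "\<pi>G x = \<pi>G (fst z)"
  obtains y where "(x, y) \<in> carrier Fib" "Diag #>\<^bsub>Fib\<^esub> (x, y) = Diag #>\<^bsub>Fib\<^esub> z"
proof -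
  obtain u v where z: "z = (u, v)" by fastforce
  define c where "c = x \<otimes>\<^bsub>G\<^esub> inv\<^bsub>G\<^esub> u"
  have uv: "u \<in> carrier G" "v \<in> carrier H" using assms(1) by (simp_all add: z carrier_fibre_product)
  have c: "c \<in> carrier C" using assms uv by (simp add: c_def z G.mem_C_iff)
  then have "(c, c) \<otimes>\<^bsub>Fib\<^esub> z = (x, c \<otimes>\<^bsub>H\<^esub> v)"
    using assms(2) uv by (simp add: z c_def mult_fibre_product G.m_assoc)
  moreover have "(c, c) \<otimes>\<^bsub>Fib\<^esub> z \<in> carrier Fib" using c assms(1) Diag_subset by blast
  ultimately show ?thesis using that Diag_coset_mult[of "(c, c)" z] c assms(1) by auto
qed

lemma Diag_coset_with_snd:
  assumes "z \<in> carrier Fib" "y \<in> carrier H" "\<pi>H y = \<pi>H (snd z)"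
  obtains x where "(x, y) \<in> carrier Fib" "Diag #>\<^bsub>Fib\<^esub> (x, y) = Diag #>\<^bsub>Fib\<^esub> z"
proof -
  obtain u v where z: "z = (u, v)" by fastforce
  define c where "c = y \<otimes>\<^bsub>H\<^esub> inv\<^bsub>H\<^esub> v"
  have uv: "u \<in> carrier G" "v \<in> carrier H" using assms(1) by (simp_all add: z carrier_fibre_product)
  have c: "c \<in> carrier C" using assms uv by (simp add: c_def z H.mem_C_iff)
  then have "(c, c) \<otimes>\<^bsub>Fib\<^esub> z = (c \<otimes>\<^bsub>G\<^esub> u, y)"
    using assms(2) uv by (simp add: z c_def mult_fibre_product H.m_assoc)
  moreover have "(c, c) \<otimes>\<^bsub>Fib\<^esub> z \<in> carrier Fib" using c assms(1) Diag_subset by blast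
  ultimately show ?thesis using that Diag_coset_mult[of "(c, c)" z] c assms(1) by auto
qed

end

locale central_extension_pair_section = central_extension_pair +
  fixes \<theta> \<sigma>
  assumes \<theta>_hom: "\<theta> \<in> hom (Fib Mod Diag) A"
    and \<theta>_coset: "\<And>z. z \<in> carrier Fib \<Longrightarrow> \<theta> (Diag #>\<^bsub>Fib\<^esub> z) = \<pi>G (fst z)"
    and \<sigma>_hom: "\<sigma> \<in> hom A (Fib Mod Diag)"
    and \<theta>_\<sigma>: "\<And>a. a \<in> carrier A \<Longrightarrow> \<theta> (\<sigma> a) = a"
begin

sublocale \<sigma>: group_hom A "Fib Mod Diag" \<sigma>
  by (simp add: group_hom_def group_hom_axioms_def G.A.is_group Diag.factorgroup_is_group \<sigma>_hom)

definition Gamma :: "('a \<times> 'a) set"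
  where "Gamma = carrier Fib \<inter> (\<lambda>z. Diag #>\<^bsub>Fib\<^esub> z) -` (\<sigma> ` carrier A)"

lemma subgroup_Gamma: "subgroup Gamma (G \<times>\<times> H)"
proof -
  interpret coset: group_hom Fib "Fib Mod Diag" "\<lambda>z. Diag #>\<^bsub>Fib\<^esub> z"
    by (simp add: group_hom_def group_hom_axioms_def Fib.is_group Diag.factorgroup_is_group
        Diag.r_coset_hom_Mod)
  have "subgroup Gamma Fib"
    unfolding Gamma_def by (rule coset.subgroup_vimage[OF \<sigma>.img_is_subgroup])
  then show ?thesis
    using group.incl_subgroup[OF DirProd_group[OF G.is_group H.is_group]
        subgroup_fibre_product[OF G.is_group H.is_group G.A.is_group G.hom_\<pi> H.hom_\<pi>]]
    by (simp add: fibre_product_def)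
qed

lemma mem_Gamma: "z \<in> carrier Fib \<Longrightarrow> Diag #>\<^bsub>Fib\<^esub> z = \<sigma> a \<Longrightarrow> a \<in> carrier A \<Longrightarrow> z \<in> Gamma"
  by (auto simp: Gamma_def)

lemma Diag_subset_Gamma: "Diag \<subseteq> Gamma"
proof
  fix d assume d: "d \<in> Diag"
  then have "Diag #>\<^bsub>Fib\<^esub> d = \<sigma> \<one>\<^bsub>A\<^esub>"
    using Fib.coset_join2[OF _ subgroup_Diag d] Diag_subset by auto
  then show "d \<in> Gamma" using mem_Gamma d Diag_subset by blast
qed

lemma Gamma_kernel_subset_Diag:
  assumes "z \<in> Gamma" "\<pi>G (fst z) = \<one>\<^bsub>A\<^esub>"
  shows "z \<in> Diag"
proof -
  have z: "z \<in> carrier Fib" and "Diag #>\<^bsub>Fib\<^esub> z \<in> \<sigma> ` carrier A"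
    using assms(1) by (simp_all add: Gamma_def)
  then obtain a where a: "a \<in> carrier A" "Diag #>\<^bsub>Fib\<^esub> z = \<sigma> a" by blast
  have "a = \<theta> (\<sigma> a)" using \<theta>_\<sigma>[OF a(1)] by simp
  also have "\<dots> = \<one>\<^bsub>A\<^esub>" using \<theta>_coset[OF z] a(2) assms(2) by simp
  finally have "Diag #>\<^bsub>Fib\<^esub> z = Diag" using a(2) by simp
  then show ?thesis using Fib.rcos_self[OF z subgroup_Diag] by simp
qed

lemma Gamma_fst_surj:
  assumes "x \<in> carrier G"
  shows "\<exists>y. (x, y) \<in> Gamma"
proof -
  obtain z where z: "z \<in> carrier Fib" "\<sigma> (\<pi>G x) = Diag #>\<^bsub>Fib\<^esub> z"
    using \<sigma>.hom_closed[OF G.hom_closed[OF assms]] by (auto simp: carrier_FactGroup)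
  then have "\<pi>G x = \<pi>G (fst z)" using \<theta>_\<sigma> \<theta>_coset assms by (metis G.hom_closed)
  then show ?thesis
    using Diag_coset_with_fst[OF z(1) assms] mem_Gamma z assms by (metis G.hom_closed)
qed

lemma Gamma_snd_surj:
  assumes "y \<in> carrier H"
  shows "\<exists>x. (x, y) \<in> Gamma"
proof -
  obtain z where z: "z \<in> carrier Fib" "\<sigma> (\<pi>H y) = Diag #>\<^bsub>Fib\<^esub> z"
    using \<sigma>.hom_closed[OF H.hom_closed[OF assms]] by (auto simp: carrier_FactGroup)
  moreover have "\<pi>G (fst z) = \<pi>H (snd z)" using z(1) by (simp add: carrier_fibre_product)
  ultimately have "\<pi>H y = \<pi>H (snd z)" using \<theta>_\<sigma> \<theta>_coset assms by (metis H.hom_closed)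
  then show ?thesis
    using Diag_coset_with_snd[OF z(1) assms] mem_Gamma z assms by (metis H.hom_closed)
qed

lemma exists_iso_fixing_C: "\<exists>f. f \<in> iso G H \<and> (\<forall>x\<in>carrier C. f x = x)"
proof -
  have fst_trivial: "x = \<one>\<^bsub>G\<^esub>" if "(x, \<one>\<^bsub>H\<^esub>) \<in> Gamma" for x
    using Gamma_kernel_subset_Diag[OF that] that one_G_eq_one_H
    by (auto simp: Gamma_def carrier_fibre_product)
  have snd_trivial: "y = \<one>\<^bsub>H\<^esub>" if "(\<one>\<^bsub>G\<^esub>, y) \<in> Gamma" for y
    using Gamma_kernel_subset_Diag[OF that] one_G_eq_one_H G.hom_one by auto
  obtain f where "f \<in> iso G H" "\<And>x y. (x, y) \<in> Gamma \<Longrightarrow> f x = y"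
    using subgroup_graph_iso[OF G.is_group H.is_group subgroup_Gamma Gamma_fst_surj Gamma_snd_surj
        fst_trivial snd_trivial]
    by blast
  then show ?thesis using Diag_subset_Gamma by blast
qed

end

theorem mainTheorem8:
  fixes C :: "('a, 'c) monoid_scheme"
    and G :: "('a, 'g) monoid_scheme"
    and H :: "('a, 'h) monoid_scheme"
    and A :: "('b, 'd) monoid_scheme"
    and c0 :: 'a and n :: nat
    and \<pi>G \<pi>H :: "'a \<Rightarrow> 'b"
    and e :: "nat \<Rightarrow> 'b" and d :: "nat \<Rightarrow> nat" and r :: nat
  assumes n_pos: "n \<ge> 1"
    and C_group: "group C"
    and C_order: "order C = n"
    and c0_gen: "c0 \<in> carrier C" "subgroup_generated C {c0} = C"
    and A_comm: "comm_group A" and A_fin: "finite (carrier A)"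
    and A_decomp: "is_internal_cyclic_decomp A e r"
    and d_def: "\<forall>i\<in>{1..r}. d i = group.ord A (e i)"
    and G_group: "group G" and H_group: "group H"
    and C_sub_G: "subgroup (carrier C) G"
      "\<forall>x\<in>carrier C. \<forall>y\<in>carrier C. x \<otimes>\<^bsub>C\<^esub> y = x \<otimes>\<^bsub>G\<^esub> y"
    and C_sub_H: "subgroup (carrier C) H"
      "\<forall>x\<in>carrier C. \<forall>y\<in>carrier C. x \<otimes>\<^bsub>C\<^esub> y = x \<otimes>\<^bsub>H\<^esub> y"
    and C_central_G: "\<forall>x\<in>carrier C. \<forall>g\<in>carrier G. x \<otimes>\<^bsub>G\<^esub> g = g \<otimes>\<^bsub>G\<^esub> x"
    and C_central_H: "\<forall>x\<in>carrier C. \<forall>h\<in>carrier H. x \<otimes>\<^bsub>H\<^esub> h = h \<otimes>\<^bsub>H\<^esub> x"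
    and \<pi>G_hom: "\<pi>G \<in> hom G A" "\<pi>G ` carrier G = carrier A" "kernel G A \<pi>G = carrier C"
    and \<pi>H_hom: "\<pi>H \<in> hom H A" "\<pi>H ` carrier H = carrier A" "kernel H A \<pi>H = carrier C"
    and phi_eq: "\<forall>a\<in>carrier A. \<forall>b\<in>carrier A. phi_form G \<pi>G c0 n a b = phi_form H \<pi>H c0 n a b"
    and lifts: "\<forall>i\<in>{1..r}. \<exists>g h. g \<in> carrier G \<and> h \<in> carrier H \<and>
                  \<pi>G g = e i \<and> \<pi>H h = e i \<and> group.ord G g = group.ord H h \<and>
                  (group.ord G g = d i \<or> group.ord G g = 2 * d i)"
  shows "\<exists>f. f \<in> iso G H \<and> (\<forall>x\<in>carrier C. f x = x)"
proof -
  have pair: "central_extension_pair C G H A \<pi>G \<pi>H c0 n"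
    using assms
    by (intro central_extension_pair.intro central_extension_pair_axioms.intro
        central_extension.intro central_extension_axioms.intro) auto
  then interpret central_extension_pair C G H A \<pi>G \<pi>H c0 n .
  obtain \<theta> where \<theta>: "\<theta> \<in> hom (Fib Mod Diag) A"
    and \<theta>_coset: "\<And>z. z \<in> carrier Fib \<Longrightarrow> \<theta> (Diag #>\<^bsub>Fib\<^esub> z) = \<pi>G (fst z)"
    using exists_hom_Mod_Diag by blast
  have "\<exists>q\<in>carrier (Fib Mod Diag). \<theta> q = e i \<and> q [^]\<^bsub>Fib Mod Diag\<^esub> G.A.ord (e i) = \<one>\<^bsub>Fib Mod Diag\<^esub>"
    if i: "i \<in> {1..r}" for i
  proof -
    obtain g h where gh: "g \<in> carrier G" "h \<in> carrier H" "\<pi>G g = e i" "\<pi>H h = e i"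
      "G.ord g = H.ord h" "G.ord g = d i \<or> G.ord g = 2 * d i"
      using lifts i by blast
    then have "(g, h) \<in> carrier Fib" by (simp add: carrier_fibre_product)
    moreover have "(Diag #>\<^bsub>Fib\<^esub> (g, h)) [^]\<^bsub>Fib Mod Diag\<^esub> d i = \<one>\<^bsub>Fib Mod Diag\<^esub>"
      using coset_pow_eq_one_of_lifts[of g h "d i"] gh d_def i G.hom_closed[OF gh(1)] by simp
    ultimately show ?thesis
      using \<theta>_coset[of "(g, h)"] gh(3) d_def i
      by (intro bexI[of _ "Diag #>\<^bsub>Fib\<^esub> (g, h)"]) (auto simp: carrier_FactGroup)
  qed
  then obtain \<sigma> where \<sigma>: "\<sigma> \<in> hom A (Fib Mod Diag)" "\<And>a. a \<in> carrier A \<Longrightarrow> \<theta> (\<sigma> a) = a"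
    using exists_section_of_cyclic_decomp[OF A_comm comm_group_Mod A_decomp \<theta>] by blast
  interpret central_extension_pair_section C G H A \<pi>G \<pi>H c0 n \<theta> \<sigma>
    by (intro central_extension_pair_section.intro[OF pair] central_extension_pair_section_axioms.intro)
      (use \<theta> \<theta>_coset \<sigma> in auto)
  show ?thesis by (rule exists_iso_fixing_C)
qed

end
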